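(* Let $R$ be an integral domain, $M$ an $R$-module, and $d$ an integer-valued metric on $M$. Then the function $\Delta:\mathbb{P}^*(M)\times\mathbb{P}^*(M)\to\mathbb{Z}$ is a metric on $\mathbb{P}^*(M)$.
   Context: Let $M^\circ=M\setminus\{0\}$; define $x\sim'y$ on $M^\circ$ if there exist $m\in M$ and $r,s\in R$ with $x=rm$, $y=sm$; let $\sim$ be the equivalence relation generated by $\sim'$; $\mathbb{P}(M)=M^\circ/\sim$, and $\mathbb{P}^*(M)=\{*\}\sqcup\mathbb{P}(M)$, where $*$ is the class consisting of $0\in M$ alone. For classes $[x],[y]\in\mathbb{P}^*(M)$ set $\delta([x],[y])=\inf\{d(x',y'): x'\in[x],\ y'\in[y]\}$, and $\Delta([x],[y])=\min\{\delta([x_0],[x_1])+\delta([x_1],[x_2])+\cdots+\delta([x_{n-1}],[x_n])\}$, the minimum over all finite sequences of classes with $[x_0]=[x]$ and $[x_n]=[y]$. *)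

theory Defs
  imports Complex_Main
begin

definition int_metric_on :: "'a set \<Rightarrow> ('a \<Rightarrow> 'a \<Rightarrow> int) \<Rightarrow> bool" where
  "int_metric_on S D \<longleftrightarrow>
     (\<forall>x\<in>S. \<forall>y\<in>S. 0 \<le> D x y \<and> (D x y = 0 \<longleftrightarrow> x = y) \<and> D x y = D y x) \<and>
     (\<forall>x\<in>S. \<forall>y\<in>S. \<forall>z\<in>S. D x z \<le> D x y + D y z)"

definition pre_sim :: "('r::comm_ring_1 \<Rightarrow> 'm::ab_group_add \<Rightarrow> 'm) \<Rightarrow> ('m \<times> 'm) set" where
  "pre_sim scale = {(x, y). x \<noteq> 0 \<and> y \<noteq> 0 \<and> (\<exists>m r s. x = scale r m \<and> y = scale s m)}"

text \<open>The equivalence relation generated by ~' (on nonzero elements), with 0 alone in its class.\<close>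
definition proj_sim :: "('r::comm_ring_1 \<Rightarrow> 'm::ab_group_add \<Rightarrow> 'm) \<Rightarrow> ('m \<times> 'm) set" where
  "proj_sim scale = (pre_sim scale \<union> converse (pre_sim scale))\<^sup>*"

text \<open>P*(M) = {*} \<union> P(M), as the set of equivalence classes; * is the class {0}.\<close>
definition proj_star :: "('r::comm_ring_1 \<Rightarrow> 'm::ab_group_add \<Rightarrow> 'm) \<Rightarrow> 'm set set" where
  "proj_star scale = UNIV // proj_sim scale"

definition class_dist :: "('m \<Rightarrow> 'm \<Rightarrow> int) \<Rightarrow> 'm set \<Rightarrow> 'm set \<Rightarrow> int" where
  "class_dist d X Y = Inf {d x y | x y. x \<in> X \<and> y \<in> Y}"

definition Delta :: "('r::comm_ring_1 \<Rightarrow> 'm::ab_group_add \<Rightarrow> 'm) \<Rightarrow> ('m \<Rightarrow> 'm \<Rightarrow> int)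
    \<Rightarrow> 'm set \<Rightarrow> 'm set \<Rightarrow> int" where
  "Delta scale d X Y = Inf {(\<Sum>i<n. class_dist d (c i) (c (Suc i))) | n c.
      c 0 = X \<and> c n = Y \<and> (\<forall>i\<le>n. c i \<in> proj_star scale)}"

end

theory Submission
  imports Defs
begin

text \<open>
  \<open>\<Delta>\<close> is the chain (path) metric induced on the partition \<open>\<P>\<^sup>*(M)\<close> by the class distance \<open>\<delta>\<close>.
  Since distinct classes are disjoint and an infimum of nonnegative integers is attained, \<open>\<delta>\<close> is
  nonnegative, symmetric and vanishes exactly on the diagonal. For the same integrality reason
  \<open>\<Delta>(X, Y)\<close> is the cost of an actual chain, so \<open>\<Delta>(X, Y) = 0\<close> yields a chain all of whose steps
  have \<open>\<delta> = 0\<close>, whence \<open>X = Y\<close>; symmetry and the triangle inequality come from reversing and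
  concatenating chains. Neither the ring nor the module structure enters: the argument works for
  the classes of any equivalence relation on an integer-valued metric space.
\<close>

lemma cInf_int_mem:
  fixes S :: "int set"
  assumes "S \<noteq> {}" "bdd_below S"
  shows "Inf S \<in> S"
proof -
  obtain x where "x \<in> S" "x < Inf S + 1"
    using cInf_less_iff[OF assms, of "Inf S + 1"] by auto
  moreover have "Inf S \<le> x"
    using \<open>x \<in> S\<close> assms(2) by (rule cInf_lower)
  ultimately show ?thesis
    by (metis add1_zle_eq antisym_conv1 not_less)
qed

definition int_semimetric_on :: "'a set \<Rightarrow> ('a \<Rightarrow> 'a \<Rightarrow> int) \<Rightarrow> bool" where
  "int_semimetric_on S \<delta> \<longleftrightarrow>
     (\<forall>x\<in>S. \<forall>y\<in>S. 0 \<le> \<delta> x y \<and> (\<delta> x y = 0 \<longleftrightarrow> x = y) \<and> \<delta> x y = \<delta> y x)"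

lemma int_metric_on_iff_semimetric_triangle:
  "int_metric_on S D \<longleftrightarrow>
     int_semimetric_on S D \<and> (\<forall>x\<in>S. \<forall>y\<in>S. \<forall>z\<in>S. D x z \<le> D x y + D y z)"
  unfolding int_metric_on_def int_semimetric_on_def ..

definition chain_costs :: "'a set \<Rightarrow> ('a \<Rightarrow> 'a \<Rightarrow> int) \<Rightarrow> 'a \<Rightarrow> 'a \<Rightarrow> int set" where
  "chain_costs S \<delta> x y = {(\<Sum>i<n. \<delta> (c i) (c (Suc i))) | n c.
      c 0 = x \<and> c n = y \<and> (\<forall>i\<le>n. c i \<in> S)}"

lemma chain_costs_refl: "x \<in> S \<Longrightarrow> 0 \<in> chain_costs S \<delta> x x"
  unfolding chain_costs_def by (intro CollectI exI[of _ "0::nat"] exI[of _ "\<lambda>_. x"]) auto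

lemma chain_costs_single: "x \<in> S \<Longrightarrow> y \<in> S \<Longrightarrow> \<delta> x y \<in> chain_costs S \<delta> x y"
  unfolding chain_costs_def
  by (intro CollectI exI[of _ "1::nat"] exI[of _ "\<lambda>i. if i = 0 then x else y"]) auto

lemma chain_costs_append:
  assumes "s \<in> chain_costs S \<delta> x y" "t \<in> chain_costs S \<delta> y z"
  shows "s + t \<in> chain_costs S \<delta> x z"
proof -
  obtain n c where s: "s = (\<Sum>i<n. \<delta> (c i) (c (Suc i)))"
    and c: "c 0 = x" "c n = y" "\<forall>i\<le>n. c i \<in> S"
    using assms(1) unfolding chain_costs_def by blast
  obtain m e where t: "t = (\<Sum>i<m. \<delta> (e i) (e (Suc i)))"
    and e: "e 0 = y" "e m = z" "\<forall>i\<le>m. e i \<in> S"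
    using assms(2) unfolding chain_costs_def by blast
  define f where "f i = (if i \<le> n then c i else e (i - n))" for i
  have "(\<Sum>i<n+m. \<delta> (f i) (f (Suc i))) =
      (\<Sum>i<n. \<delta> (f i) (f (Suc i))) + (\<Sum>i<m. \<delta> (f (n + i)) (f (Suc (n + i))))"
    by (induction m) (simp_all add: add.assoc)
  also have "(\<Sum>i<n. \<delta> (f i) (f (Suc i))) = s"
    unfolding s by (rule sum.cong) (auto simp: f_def)
  also have "(\<Sum>i<m. \<delta> (f (n + i)) (f (Suc (n + i)))) = t"
    unfolding t by (rule sum.cong) (auto simp: f_def c e Suc_diff_le)
  finally show ?thesis
    unfolding chain_costs_def using c e
    by (intro CollectI exI[of _ "n+m"] exI[of _ f]) (auto simp: f_def)
qed

lemma chain_costs_rev: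
  assumes sym: "\<And>x y. x \<in> S \<Longrightarrow> y \<in> S \<Longrightarrow> \<delta> x y = \<delta> y x"
    and "t \<in> chain_costs S \<delta> x y"
  shows "t \<in> chain_costs S \<delta> y x"
proof -
  obtain n c where t: "t = (\<Sum>i<n. \<delta> (c i) (c (Suc i)))"
    and c: "c 0 = x" "c n = y" "\<forall>i\<le>n. c i \<in> S"
    using assms(2) unfolding chain_costs_def by blast
  define c' where "c' i = c (n - i)" for i
  have "(\<Sum>i<n. \<delta> (c' i) (c' (Suc i))) = (\<Sum>i<n. (\<lambda>j. \<delta> (c j) (c (Suc j))) (n - Suc i))"
    using c(3) by (intro sum.cong) (auto simp: c'_def Suc_diff_Suc sym)
  also have "\<dots> = t"
    unfolding t by (rule sum.nat_diff_reindex)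
  finally show ?thesis
    unfolding chain_costs_def using c
    by (intro CollectI exI[of _ n] exI[of _ c']) (auto simp: c'_def)
qed

lemma chain_costs_nonneg:
  assumes "\<And>x y. x \<in> S \<Longrightarrow> y \<in> S \<Longrightarrow> 0 \<le> \<delta> x y"
    and "t \<in> chain_costs S \<delta> x y"
  shows "0 \<le> t"
  using assms unfolding chain_costs_def by (force intro!: sum_nonneg)

lemma chain_costs_zero_imp_eq:
  assumes semi: "int_semimetric_on S \<delta>"
    and "0 \<in> chain_costs S \<delta> x y"
  shows "x = y"
proof -
  obtain n c where zero: "(\<Sum>i<n. \<delta> (c i) (c (Suc i))) = 0"
    and c: "c 0 = x" "c n = y" "\<forall>i\<le>n. c i \<in> S"
    using assms(2) unfolding chain_costs_def by auto
  have "\<delta> (c i) (c (Suc i)) = 0" if "i < n" for i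
    using zero c(3) semi that unfolding int_semimetric_on_def
    by (subst (asm) sum_nonneg_eq_0_iff) auto
  then have step: "c (Suc i) = c i" if "i < n" for i
    using c(3) semi that unfolding int_semimetric_on_def by force
  have "c k = c 0" if "k \<le> n" for k
    using that by (induction k) (auto simp: step)
  then show ?thesis
    using c by auto
qed

theorem int_metric_on_Inf_chain_costs:
  assumes semi: "int_semimetric_on S \<delta>"
  shows "int_metric_on S (\<lambda>x y. Inf (chain_costs S \<delta> x y))"
proof -
  let ?D = "\<lambda>x y. Inf (chain_costs S \<delta> x y)"
  have nonneg: "0 \<le> t" if "t \<in> chain_costs S \<delta> x y" for t x y
    using semi that unfolding int_semimetric_on_def by (blast intro: chain_costs_nonneg)
  have bdd: "bdd_below (chain_costs S \<delta> x y)" for x y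
    using nonneg by (rule bdd_belowI)
  have D_le: "?D x y \<le> t" if "t \<in> chain_costs S \<delta> x y" for t x y
    using that bdd by (rule cInf_lower)
  have D_mem: "?D x y \<in> chain_costs S \<delta> x y" if "x \<in> S" "y \<in> S" for x y
    using chain_costs_single[OF that] bdd by (intro cInf_int_mem) auto
  have sym: "\<delta> x y = \<delta> y x" if "x \<in> S" "y \<in> S" for x y
    using semi that unfolding int_semimetric_on_def by blast
  have "int_semimetric_on S ?D"
    unfolding int_semimetric_on_def
  proof (intro ballI conjI iffI)
    fix x y assume x: "x \<in> S" and y: "y \<in> S"
    show "0 \<le> ?D x y"
      using D_mem[OF x y] by (rule nonneg)
    show "x = y" if "?D x y = 0"
      using D_mem[OF x y] that chain_costs_zero_imp_eq[OF semi] by simp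
    show "?D x y = 0" if "x = y"
      using D_le[OF chain_costs_refl[OF x]] nonneg[OF D_mem[OF x x]] that by simp
    show "?D x y = ?D y x"
      using D_le[OF chain_costs_rev[OF sym D_mem[OF x y]]]
        D_le[OF chain_costs_rev[OF sym D_mem[OF y x]]] by simp
  qed
  moreover have "?D x z \<le> ?D x y + ?D y z" if "x \<in> S" "y \<in> S" "z \<in> S" for x y z
    using D_le[OF chain_costs_append[OF D_mem D_mem]] that by blast
  ultimately show ?thesis
    unfolding int_metric_on_iff_semimetric_triangle by blast
qed

context
  fixes d :: "'a \<Rightarrow> 'a \<Rightarrow> int"
  assumes metric: "int_metric_on UNIV d"
begin

lemma metric_nonneg: "0 \<le> d x y"
  and metric_eq_0_iff: "d x y = 0 \<longleftrightarrow> x = y"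
  and metric_commute: "d x y = d y x"
  using metric unfolding int_metric_on_def by auto

lemma bdd_below_dists: "bdd_below {d x y | x y. x \<in> X \<and> y \<in> Y}"
  by (rule bdd_belowI[of _ 0]) (auto simp: metric_nonneg)

lemma class_dist_attained:
  assumes "X \<noteq> {}" "Y \<noteq> {}"
  shows "\<exists>x\<in>X. \<exists>y\<in>Y. class_dist d X Y = d x y"
proof -
  have "{d x y | x y. x \<in> X \<and> y \<in> Y} \<noteq> {}"
    using assms by blast
  then have "class_dist d X Y \<in> {d x y | x y. x \<in> X \<and> y \<in> Y}"
    unfolding class_dist_def using bdd_below_dists by (rule cInf_int_mem)
  then show ?thesis
    by blast
qed

lemma class_dist_le: "x \<in> X \<Longrightarrow> y \<in> Y \<Longrightarrow> class_dist d X Y \<le> d x y"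
  unfolding class_dist_def by (rule cInf_lower[OF _ bdd_below_dists]) blast

lemma class_dist_commute: "class_dist d X Y = class_dist d Y X"
proof -
  have "{d x y | x y. x \<in> X \<and> y \<in> Y} = {d x y | x y. x \<in> Y \<and> y \<in> X}"
    using metric_commute by blast
  then show ?thesis
    unfolding class_dist_def by simp
qed

lemma class_dist_nonneg: "X \<noteq> {} \<Longrightarrow> Y \<noteq> {} \<Longrightarrow> 0 \<le> class_dist d X Y"
  using class_dist_attained metric_nonneg by metis

lemma class_dist_eq_0_iff:
  assumes "X \<noteq> {}" "Y \<noteq> {}"
  shows "class_dist d X Y = 0 \<longleftrightarrow> X \<inter> Y \<noteq> {}"
proof
  assume "class_dist d X Y = 0"
  then show "X \<inter> Y \<noteq> {}"
    using class_dist_attained[OF assms] metric_eq_0_iff by auto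
next
  assume "X \<inter> Y \<noteq> {}"
  then obtain z where "z \<in> X" "z \<in> Y"
    by blast
  then have "class_dist d X Y \<le> 0"
    using class_dist_le[of z X z Y] metric_eq_0_iff[of z z] by simp
  then show "class_dist d X Y = 0"
    using class_dist_nonneg[OF assms] by simp
qed

lemma int_semimetric_on_quotient_class_dist:
  assumes "equiv UNIV r"
  shows "int_semimetric_on (UNIV // r) (class_dist d)"
  unfolding int_semimetric_on_def
proof (intro ballI conjI)
  fix X Y assume X: "X \<in> UNIV // r" and Y: "Y \<in> UNIV // r"
  have ne: "X \<noteq> {}" "Y \<noteq> {}"
    using X Y assms in_quotient_imp_non_empty by blast+
  show "0 \<le> class_dist d X Y"
    using ne by (rule class_dist_nonneg)
  show "class_dist d X Y = 0 \<longleftrightarrow> X = Y"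
    using class_dist_eq_0_iff[OF ne] quotient_disj[OF assms X Y] ne by auto
  show "class_dist d X Y = class_dist d Y X"
    by (rule class_dist_commute)
qed

end

lemma equiv_proj_sim: "equiv UNIV (proj_sim scale)"
  unfolding proj_sim_def
  by (rule equivI) (auto simp: refl_on_def sym_rtrancl sym_Un_converse trans_def)

lemma Delta_eq_Inf_chain_costs:
  "Delta scale d X Y = Inf (chain_costs (proj_star scale) (class_dist d) X Y)"
  unfolding Delta_def chain_costs_def ..

theorem theorem5p2:
  fixes scale :: "'r::idom \<Rightarrow> 'm::ab_group_add \<Rightarrow> 'm"
    and d :: "'m \<Rightarrow> 'm \<Rightarrow> int"
  assumes "module scale"
    and "int_metric_on UNIV d"
  shows "int_metric_on (proj_star scale) (Delta scale d)"
proof -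
  have "int_semimetric_on (proj_star scale) (class_dist d)"
    unfolding proj_star_def
    using assms(2) equiv_proj_sim by (rule int_semimetric_on_quotient_class_dist)
  then show ?thesis
    unfolding Delta_eq_Inf_chain_costs[abs_def] by (rule int_metric_on_Inf_chain_costs)
qed

end
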